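(* Let $(g(x))_{x\ge0}$ be a semigroup acting on a real finite-dimensional vector space $V$, with SRPD $V=\bigoplus_{i=1}^nV_i$. Let $I$ be the set of indices $i$ such that $V_i$ is of first type and its eigenvalue satisfies $\lambda(x)=0$ for all $x>0$. Then for every $x>0$, $\ker g(x)=\bigoplus_{i\in I}V_i$.
   Context: A semigroup is a map $g:[0,\infty)\to L(V)$ with $g(0)=\mathrm{id}$ and $g(x+y)=g(x)g(y)$ for all $x,y\ge0$. A simultaneous real primary decomposition (SRPD) is a decomposition $V=\bigoplus_{i=1}^nV_i$ into nonzero subspaces, each $g(x)$-invariant for all $x\ge0$, such that each $V_i$ is either of first type: for every $x\ge0$, $g(x)|_{V_i}$ has exactly one (complex) eigenvalue $\lambda(x)$, which is real and $\ge0$; or of second type: for every $x\ge 0$ the eigenvalues of $g(x)|_{V_i}$ lie in $\{\lambda(x),\overline{\lambda(x)}\}$ for some $\lambda(x)\in\mathbb C$, with $\lambda(x)\notin\mathbb R$ for some $x$. *)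

theory Defs
  imports "HOL-Analysis.Analysis"
begin

definition is_semigroup :: "(real \<Rightarrow> 'a::euclidean_space \<Rightarrow> 'a) \<Rightarrow> bool" where
  "is_semigroup g \<longleftrightarrow> (\<forall>x\<ge>0. linear (g x)) \<and> g 0 = id \<and>
     (\<forall>x\<ge>0. \<forall>y\<ge>0. g (x + y) = g x \<circ> g y)"

text \<open>mu is a (complex) eigenvalue of the restriction of the real linear map T to the
invariant subspace W, i.e. an eigenvalue of the complexification of T restricted to W:
T(u + i v) = mu (u + i v) with u + i v nonzero, u, v in W, written out in real and imaginary parts.\<close>
definition cplx_eigenvalue_on :: "('a::real_vector \<Rightarrow> 'a) \<Rightarrow> 'a set \<Rightarrow> complex \<Rightarrow> bool" where
  "cplx_eigenvalue_on T W mu \<longleftrightarrow>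
     (\<exists>u\<in>W. \<exists>v\<in>W. (u \<noteq> 0 \<or> v \<noteq> 0) \<and>
        T u = Re mu *\<^sub>R u - Im mu *\<^sub>R v \<and> T v = Im mu *\<^sub>R u + Re mu *\<^sub>R v)"

definition eigenvalues_on :: "('a::real_vector \<Rightarrow> 'a) \<Rightarrow> 'a set \<Rightarrow> complex set" where
  "eigenvalues_on T W = {mu. cplx_eigenvalue_on T W mu}"

definition first_type :: "(real \<Rightarrow> 'a::real_vector \<Rightarrow> 'a) \<Rightarrow> 'a set \<Rightarrow> bool" where
  "first_type g W \<longleftrightarrow>
     (\<forall>x\<ge>0. \<exists>r::real. r \<ge> 0 \<and> eigenvalues_on (g x) W = {complex_of_real r})"

definition second_type :: "(real \<Rightarrow> 'a::real_vector \<Rightarrow> 'a) \<Rightarrow> 'a set \<Rightarrow> bool" where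
  "second_type g W \<longleftrightarrow>
     (\<exists>lam :: real \<Rightarrow> complex.
        (\<forall>x\<ge>0. eigenvalues_on (g x) W \<subseteq> {lam x, cnj (lam x)}) \<and>
        (\<exists>x\<ge>0. lam x \<notin> \<real>))"

definition is_SRPD :: "(real \<Rightarrow> 'a::euclidean_space \<Rightarrow> 'a) \<Rightarrow> nat \<Rightarrow> (nat \<Rightarrow> 'a set) \<Rightarrow> bool" where
  "is_SRPD g n V \<longleftrightarrow>
     (\<forall>i<n. subspace (V i) \<and> V i \<noteq> {0}) \<and>
     (\<forall>v. \<exists>w. (\<forall>i<n. w i \<in> V i) \<and> v = (\<Sum>i<n. w i)) \<and>
     (\<forall>w. (\<forall>i<n. w i \<in> V i) \<and> (\<Sum>i<n. w i) = 0 \<longrightarrow> (\<forall>i<n. w i = 0)) \<and>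
     (\<forall>i<n. \<forall>x\<ge>0. g x ` V i \<subseteq> V i) \<and>
     (\<forall>i<n. first_type g (V i) \<or> second_type g (V i))"

end

theory Submission
  imports Defs "HOL-Computational_Algebra.Fundamental_Theorem_Algebra"
begin

text \<open>
  Each g(x) preserves the decomposition, so its kernel is the sum of the components on which it
  vanishes, provided it is injective on the others.
  If on a component all eigenvalues of g(y) are 0 for every y > 0, then g(y) is nilpotent there
  with index at most N = dim V: the minimal annihilating polynomial of a vector has only the root 0,
  since each of its complex roots is an eigenvalue. Hence g(x) = g(x/N)^N vanishes on the component.
  On any other component some g(x0), x0 > 0, does not have the eigenvalue 0 (for the second type,
  x0 = 0 is excluded because g(0) = id has the real eigenvalue 1), so g(x0) is injective there,
  and g(k x0) = g(k x0 - x) g(x) with k x0 > x shows that g(x) is injective as well.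
\<close>

definition poly_apply :: "real poly \<Rightarrow> ('a::real_vector \<Rightarrow> 'a) \<Rightarrow> 'a \<Rightarrow> 'a" where
  "poly_apply p T u = foldr (\<lambda>a v. a *\<^sub>R u + T v) (coeffs p) 0"

lemma poly_apply_0 [simp]: "poly_apply 0 T u = 0"
  by (simp add: poly_apply_def)

lemma poly_apply_pCons:
  assumes "linear T"
  shows "poly_apply (pCons a p) T u = a *\<^sub>R u + T (poly_apply p T u)"
proof (cases "a = 0 \<and> p = 0")
  case True
  then show ?thesis using linear_0[OF assms] by (simp add: poly_apply_def)
next
  case False
  then have "coeffs (pCons a p) = a # coeffs p"
    by (auto simp: cCons_def)
  then show ?thesis by (simp add: poly_apply_def)
qed

lemma poly_apply_add:
  assumes "linear T"
  shows "poly_apply (p + q) T u = poly_apply p T u + poly_apply q T u"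
  by (induction p q rule: poly_induct2)
     (simp_all add: poly_apply_pCons assms linear_add algebra_simps)

lemma poly_apply_smult:
  assumes "linear T"
  shows "poly_apply (smult c p) T u = c *\<^sub>R poly_apply p T u"
  by (induction p) (simp_all add: poly_apply_pCons assms linear_scale linear_add algebra_simps)

lemma poly_apply_mult:
  assumes "linear T"
  shows "poly_apply (p * q) T u = poly_apply p T (poly_apply q T u)"
proof (induction p)
  case (pCons a p)
  have "pCons a p * q = smult a q + pCons 0 (p * q)" by simp
  then show ?case using pCons assms by (simp add: poly_apply_pCons poly_apply_add poly_apply_smult)
qed simp

lemma poly_apply_monom:
  assumes "linear T"
  shows "poly_apply (monom a k) T u = a *\<^sub>R (T ^^ k) u"
  by (induction k) (simp_all add: assms monom_0 monom_Suc poly_apply_pCons linear_0 linear_scale)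

lemma poly_apply_sum:
  assumes "linear T"
  shows "poly_apply (\<Sum>k\<in>A. f k) T u = (\<Sum>k\<in>A. poly_apply (f k) T u)"
  by (induction A rule: infinite_finite_induct) (simp_all add: poly_apply_add assms)

lemma poly_apply_in_subspace:
  assumes "linear T" "subspace W" "T ` W \<subseteq> W" "u \<in> W"
  shows "poly_apply p T u \<in> W"
  by (induction p)
     (use assms in \<open>auto simp: poly_apply_pCons subspace_0 intro!: subspace_add subspace_mul\<close>)

lemma annihilator_exists:
  fixes T :: "'a::euclidean_space \<Rightarrow> 'a"
  assumes lin: "linear T"
  shows "\<exists>p. p \<noteq> 0 \<and> degree p \<le> DIM('a) \<and> poly_apply p T u = 0"
proof -
  define N where "N = DIM('a)"
  define f where "f k = (T ^^ k) u" for k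
  show ?thesis
  proof (cases "inj_on f {..N}")
    case False
    then obtain j k where jk: "j \<le> N" "k \<le> N" "j \<noteq> k" "f j = f k"
      unfolding inj_on_def by auto
    define p where "p = monom (1::real) j + monom (-1) k"
    have "coeff p j = 1" using jk by (simp add: p_def)
    then have "p \<noteq> 0" by auto
    moreover have "degree p \<le> N"
      using jk unfolding p_def by (intro degree_add_le) (simp_all add: degree_monom_eq)
    moreover have "poly_apply p T u = 0"
      using jk by (simp add: p_def poly_apply_add poly_apply_monom lin f_def)
    ultimately show ?thesis unfolding N_def by blast
  next
    case True
    define B where "B = f ` {..N}"
    have "card B = N + 1" using True by (simp add: B_def card_image)
    then have "\<not> independent B" using independent_bound unfolding N_def by fastforce
    moreover have "finite B" by (simp add: B_def)
    ultimately obtain c where c: "(\<Sum>v\<in>B. c v *\<^sub>R v) = 0" and "\<exists>v\<in>B. c v \<noteq> 0"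
      unfolding eucl.independent_explicit by blast
    then obtain k0 where k0: "k0 \<le> N" "c (f k0) \<noteq> 0" unfolding B_def by auto
    define p where "p = (\<Sum>k\<le>N. monom (c (f k)) k)"
    have "coeff p k0 = c (f k0)" using k0 by (simp add: p_def coeff_sum)
    then have "p \<noteq> 0" using k0 by auto
    moreover have "degree p \<le> N"
      unfolding p_def by (intro degree_sum_le) (auto intro: order.trans[OF degree_monom_le])
    moreover have "poly_apply p T u = (\<Sum>k\<le>N. c (f k) *\<^sub>R f k)"
      by (simp add: p_def poly_apply_sum poly_apply_monom lin f_def)
    moreover have "\<dots> = (\<Sum>v\<in>B. c v *\<^sub>R v)"
      unfolding B_def by (subst sum.reindex[OF True]) simp
    ultimately show ?thesis using c unfolding N_def by auto
  qed
qed

lemma map_poly_of_real_add: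
  "map_poly of_real (p + q) = map_poly of_real p + (map_poly of_real q :: complex poly)"
  by (rule poly_eqI) (simp add: coeff_map_poly)

lemma map_poly_of_real_mult:
  "map_poly of_real (p * q) = map_poly of_real p * (map_poly of_real q :: complex poly)"
proof (induction p)
  case (pCons a p)
  have "pCons a p * q = smult a q + pCons 0 (p * q)" by simp
  then show ?case using pCons
    by (simp add: map_poly_pCons map_poly_of_real_add map_poly_smult)
qed simp

lemma poly_map_poly_of_real: "poly (map_poly of_real p) (of_real x) = (of_real (poly p x) :: complex)"
  by (induction p) (simp_all add: map_poly_pCons)

lemma quadratic_dvd_of_nonreal_root:
  fixes p :: "real poly"
  assumes root: "poly (map_poly of_real p) (Complex a b) = 0" and "b \<noteq> 0"
  shows "[:a\<^sup>2 + b\<^sup>2, -2 * a, 1:] dvd p"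
proof -
  define Q where "Q = [:a\<^sup>2 + b\<^sup>2, -2 * a, 1:]"
  define r where "r = p mod Q"
  have "Q \<noteq> 0" "degree Q = 2" by (simp_all add: Q_def)
  have "poly (map_poly of_real Q) (Complex a b) = 0"
    by (simp add: Q_def map_poly_pCons complex_eq_iff power2_eq_square algebra_simps)
  moreover have "p = p div Q * Q + r" by (simp add: r_def)
  ultimately have "poly (map_poly of_real r) (Complex a b) = 0"
    using root by (metis map_poly_of_real_add map_poly_of_real_mult poly_add poly_mult
        mult_zero_right add_0)
  moreover have "r = [:coeff r 0, coeff r 1:]"
  proof -
    have "r = 0 \<or> degree r < 2"
      using degree_mod_less[OF \<open>Q \<noteq> 0\<close>, of p] \<open>degree Q = 2\<close> by (simp add: r_def)
    then show ?thesis by (auto intro!: poly_eqI simp: coeff_pCons coeff_eq_0 split: nat.split)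
  qed
  ultimately have "coeff r 0 + Complex a b * coeff r 1 = 0"
    by (metis map_poly_pCons map_poly_0 poly_pCons poly_0 mult_zero_right add_0_right of_real_0)
  then have "coeff r 1 = 0 \<and> coeff r 0 = 0" using \<open>b \<noteq> 0\<close> by (auto simp: complex_eq_iff)
  then have "r = 0" using \<open>r = [:coeff r 0, coeff r 1:]\<close> by simp
  then show ?thesis by (simp add: Q_def r_def mod_eq_0_iff_dvd)
qed

lemma cplx_eigenvalue_on_of_linear_factor:
  assumes "linear T" "subspace W" "w \<in> W" "w \<noteq> 0" "poly_apply [:-a, 1:] T w = 0"
  shows "cplx_eigenvalue_on T W (of_real a)"
proof -
  have "T w = a *\<^sub>R w" using assms by (simp add: poly_apply_pCons linear_0)
  then show ?thesis unfolding cplx_eigenvalue_on_def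
    using assms by (intro bexI[of _ w] bexI[of _ 0]) (auto simp: linear_0 subspace_0)
qed

lemma cplx_eigenvalue_on_of_quadratic_factor:
  assumes lin: "linear T" and W: "subspace W" "T ` W \<subseteq> W" and w: "w \<in> W" "w \<noteq> 0"
    and "b \<noteq> 0" and annihilates: "poly_apply [:a\<^sup>2 + b\<^sup>2, -2 * a, 1:] T w = 0"
  shows "cplx_eigenvalue_on T W (Complex a b)"
proof -
  \<comment> \<open>real and imaginary parts of the complex eigenvector \<open>T w - (a - i b) w\<close>\<close>
  define u where "u = T w - a *\<^sub>R w"
  define v where "v = b *\<^sub>R w"
  have "(a\<^sup>2 + b\<^sup>2) *\<^sub>R w + ((-2 * a) *\<^sub>R T w + T (T w)) = 0"
    using annihilates lin by (simp add: poly_apply_pCons linear_0 linear_add linear_diff linear_scale)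
  moreover have "(-2 * a) *\<^sub>R T w = - (a *\<^sub>R T w) - a *\<^sub>R T w"
    by (simp add: algebra_simps flip: scaleR_add_left)
  ultimately have "T u - (a *\<^sub>R u - b *\<^sub>R v) = 0"
    using lin by (simp add: u_def v_def linear_diff linear_scale algebra_simps power2_eq_square)
  then have "T u = a *\<^sub>R u - b *\<^sub>R v" by (simp only: right_minus_eq)
  moreover have "T v = b *\<^sub>R u + a *\<^sub>R v"
    using lin by (simp add: u_def v_def linear_scale algebra_simps)
  moreover have "u \<in> W" "v \<in> W" using w W unfolding u_def v_def
    by (auto intro!: subspace_diff subspace_mul)
  moreover have "v \<noteq> 0" using w \<open>b \<noteq> 0\<close> by (simp add: v_def)
  ultimately show ?thesis unfolding cplx_eigenvalue_on_def by auto
qed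

lemma root_of_minimal_annihilator_is_eigenvalue:
  assumes lin: "linear T" and W: "subspace W" "T ` W \<subseteq> W" and "u \<in> W"
    and p: "p \<noteq> 0" "poly_apply p T u = 0"
    and minimal: "\<And>q. q \<noteq> 0 \<Longrightarrow> poly_apply q T u = 0 \<Longrightarrow> degree p \<le> degree q"
    and root: "poly (map_poly of_real p) z = 0"
  shows "cplx_eigenvalue_on T W z"
proof -
  have factor_annihilates: "\<exists>w\<in>W. w \<noteq> 0 \<and> poly_apply f T w = 0" if "f dvd p" "degree f > 0" for f
  proof -
    obtain q where q: "p = f * q" using \<open>f dvd p\<close> by (rule dvdE)
    with p have "q \<noteq> 0" "f \<noteq> 0" by auto
    then have "degree q < degree p" using q \<open>degree f > 0\<close> by (simp add: degree_mult_eq)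
    then have "poly_apply q T u \<noteq> 0" using minimal \<open>q \<noteq> 0\<close> by fastforce
    moreover have "poly_apply f T (poly_apply q T u) = 0" using p q by (simp add: poly_apply_mult lin)
    ultimately show ?thesis using poly_apply_in_subspace[OF lin W \<open>u \<in> W\<close>] by blast
  qed
  show ?thesis
  proof (cases "Im z = 0")
    case True
    then have "poly p (Re z) = 0"
      using root poly_map_poly_of_real[of p "Re z"] by (simp add: complex_is_Real_iff)
    then have "[:- Re z, 1:] dvd p" by (simp add: poly_eq_0_iff_dvd)
    then obtain w where "w \<in> W" "w \<noteq> 0" "poly_apply [:- Re z, 1:] T w = 0"
      using factor_annihilates by fastforce
    then have "cplx_eigenvalue_on T W (of_real (Re z))"
      by (rule cplx_eigenvalue_on_of_linear_factor[OF lin W(1)])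
    moreover have "of_real (Re z) = z" using True by (simp add: complex_eq_iff)
    ultimately show ?thesis by simp
  next
    case False
    then have "[:(Re z)\<^sup>2 + (Im z)\<^sup>2, -2 * Re z, 1:] dvd p"
      using root quadratic_dvd_of_nonreal_root[of p "Re z" "Im z"] by simp
    then obtain w where "w \<in> W" "w \<noteq> 0" "poly_apply [:(Re z)\<^sup>2 + (Im z)\<^sup>2, -2 * Re z, 1:] T w = 0"
      using factor_annihilates by fastforce
    then have "cplx_eigenvalue_on T W (Complex (Re z) (Im z))"
      using cplx_eigenvalue_on_of_quadratic_factor[OF lin W _ _ False] by blast
    then show ?thesis by simp
  qed
qed

lemma monom_if_only_root_zero:
  fixes p :: "real poly"
  assumes "p \<noteq> 0" and roots: "\<And>z :: complex. poly (map_poly of_real p) z = 0 \<Longrightarrow> z = 0"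
  shows "p = monom (lead_coeff p) (degree p)"
proof -
  obtain q where q: "p = [:0, 1:] ^ order 0 p * q" and "\<not> [:0, 1:] dvd q"
    using order_decomp[OF \<open>p \<noteq> 0\<close>, of 0] by auto
  then have "poly q 0 \<noteq> 0" by (simp add: poly_eq_0_iff_dvd)
  have "degree q = 0"
  proof (rule ccontr)
    assume "degree q \<noteq> 0"
    then have "degree (map_poly complex_of_real q) \<noteq> 0" by (simp add: degree_map_poly)
    then obtain z where z: "poly (map_poly complex_of_real q) z = 0"
      using fundamental_theorem_of_algebra_alt[of "map_poly of_real q"] by fastforce
    then have "poly (map_poly of_real p) z = 0"
      by (subst q) (simp add: map_poly_of_real_mult)
    then have "z = 0" by (rule roots)
    with z \<open>poly q 0 \<noteq> 0\<close> show False using poly_map_poly_of_real[of q 0] by simp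
  qed
  then have "p = monom (coeff q 0) (order 0 p)"
    by (subst q) (auto elim: degree_eq_zeroE simp: monom_altdef)
  then show ?thesis by (metis \<open>p \<noteq> 0\<close> degree_monom_eq lead_coeff_monom monom_eq_0_iff)
qed

lemma funpow_DIM_eq_0_if_eigenvalues_zero:
  fixes T :: "'a::euclidean_space \<Rightarrow> 'a"
  assumes lin: "linear T" and W: "subspace W" "T ` W \<subseteq> W"
    and eigenvalues: "eigenvalues_on T W \<subseteq> {0}" and "u \<in> W"
  shows "(T ^^ DIM('a)) u = 0"
proof -
  define annihilates where "annihilates p \<longleftrightarrow> p \<noteq> 0 \<and> poly_apply p T u = 0" for p
  obtain p0 where "annihilates p0" "degree p0 \<le> DIM('a)"
    using annihilator_exists[OF lin] unfolding annihilates_def by blast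
  then obtain p where "annihilates p" and minimal: "\<And>q. annihilates q \<Longrightarrow> degree p \<le> degree q"
    using ex_has_least_nat[of annihilates p0 degree] by blast
  then have p: "p \<noteq> 0" "poly_apply p T u = 0" "degree p \<le> DIM('a)"
    using \<open>degree p0 \<le> DIM('a)\<close> \<open>annihilates p0\<close> unfolding annihilates_def by fastforce+
  have "z = 0" if "poly (map_poly of_real p) z = 0" for z :: complex
  proof -
    have "cplx_eigenvalue_on T W z"
      using root_of_minimal_annihilator_is_eigenvalue[OF lin W \<open>u \<in> W\<close> p(1,2) _ that]
        minimal unfolding annihilates_def by blast
    then show ?thesis using eigenvalues by (auto simp: eigenvalues_on_def)
  qed
  then have "p = monom (lead_coeff p) (degree p)"
    using monom_if_only_root_zero[OF \<open>p \<noteq> 0\<close>] by blast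
  then have "lead_coeff p *\<^sub>R (T ^^ degree p) u = 0"
    using p(2) poly_apply_monom[OF lin, of "lead_coeff p" "degree p" u] by simp
  then have "(T ^^ degree p) u = 0" using p(1) by simp
  moreover have "(T ^^ k) 0 = 0" for k
    by (induction k) (simp_all add: linear_0[OF lin])
  moreover have "T ^^ DIM('a) = T ^^ (DIM('a) - degree p) \<circ> T ^^ degree p"
    using p(3) by (simp flip: funpow_add)
  ultimately show ?thesis by simp
qed

lemma zero_in_eigenvalues_on_iff:
  assumes "subspace W"
  shows "0 \<in> eigenvalues_on T W \<longleftrightarrow> (\<exists>u\<in>W. u \<noteq> 0 \<and> T u = 0)"
  using assms by (auto simp: eigenvalues_on_def cplx_eigenvalue_on_def subspace_0)

lemma one_in_eigenvalues_on_id: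
  assumes "subspace W" "W \<noteq> {0}"
  shows "1 \<in> eigenvalues_on id W"
proof -
  obtain u where "u \<in> W" "u \<noteq> 0" using assms subspace_0 by blast
  then show ?thesis using assms(1)
    by (auto simp: eigenvalues_on_def cplx_eigenvalue_on_def subspace_0 intro!: bexI[of _ u])
qed

lemma funpow_eq_0_imp_eq_0:
  assumes "T ` W \<subseteq> W" and inj: "\<And>u. u \<in> W \<Longrightarrow> T u = 0 \<Longrightarrow> u = 0"
    and "u \<in> W" "(T ^^ k) u = 0"
  shows "u = 0"
  using assms(3,4)
proof (induction k arbitrary: u)
  case (Suc k)
  have "(T ^^ k) u \<in> W" using Suc.prems(1) assms(1) by (induction k) auto
  then have "(T ^^ k) u = 0" using inj Suc.prems(2) by simp
  then show ?case using Suc by blast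
qed simp

lemma semigroup_linear: "is_semigroup g \<Longrightarrow> x \<ge> 0 \<Longrightarrow> linear (g x)"
  by (simp add: is_semigroup_def)

lemma semigroup_add: "is_semigroup g \<Longrightarrow> x \<ge> 0 \<Longrightarrow> y \<ge> 0 \<Longrightarrow> g (x + y) = g x \<circ> g y"
  by (simp add: is_semigroup_def)

lemma semigroup_of_nat_mult:
  assumes "is_semigroup g" "y \<ge> 0"
  shows "g (real k * y) = g y ^^ k"
proof (induction k)
  case 0 then show ?case using assms by (simp add: is_semigroup_def)
next
  case (Suc k)
  have "g (real (Suc k) * y) = g (y + real k * y)" by (simp add: algebra_simps)
  also have "\<dots> = g y \<circ> g (real k * y)" using assms by (intro semigroup_add) auto
  finally show ?case using Suc by simp
qed

lemma semigroup_vanishes_on_nilpotent_subspace: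
  fixes g :: "real \<Rightarrow> 'a::euclidean_space \<Rightarrow> 'a"
  assumes g: "is_semigroup g" and W: "subspace W" "\<And>y. y \<ge> 0 \<Longrightarrow> g y ` W \<subseteq> W"
    and eigenvalues: "\<forall>y>0. eigenvalues_on (g y) W = {0}" and "x > 0" "v \<in> W"
  shows "g x v = 0"
proof -
  define y where "y = x / DIM('a)"
  have "y > 0" using \<open>x > 0\<close> by (simp add: y_def)
  then have "(g y ^^ DIM('a)) v = 0"
    using funpow_DIM_eq_0_if_eigenvalues_zero[OF semigroup_linear[OF g] W(1) W(2)] eigenvalues \<open>v \<in> W\<close>
    by simp
  moreover have "g x = g y ^^ DIM('a)"
    using semigroup_of_nat_mult[OF g, of y "DIM('a)"] \<open>y > 0\<close> by (simp add: y_def)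
  ultimately show ?thesis by simp
qed

lemma semigroup_injective_on_subspace:
  assumes g: "is_semigroup g" and W: "\<And>y. y \<ge> 0 \<Longrightarrow> g y ` W \<subseteq> W" "subspace W"
    and "x0 > 0" "0 \<notin> eigenvalues_on (g x0) W" and "x \<ge> 0" "v \<in> W" "g x v = 0"
  shows "v = 0"
proof -
  obtain k where k: "x < real k * x0" using ex_less_of_nat_mult[OF \<open>x0 > 0\<close>] by blast
  have "g (real k * x0) v = g (real k * x0 - x) (g x v)"
    using semigroup_add[OF g, of "real k * x0 - x" x] k \<open>x \<ge> 0\<close> by simp
  also have "\<dots> = 0"
    using \<open>g x v = 0\<close> linear_0[OF semigroup_linear[OF g]] k by simp
  finally have "(g x0 ^^ k) v = 0" using semigroup_of_nat_mult[OF g, of x0 k] \<open>x0 > 0\<close> by simp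
  moreover have "u = 0" if "u \<in> W" "g x0 u = 0" for u
    using that zero_in_eigenvalues_on_iff[OF W(2)] \<open>0 \<notin> eigenvalues_on (g x0) W\<close> by blast
  ultimately show ?thesis
    using funpow_eq_0_imp_eq_0[of "g x0" W] W(1)[of x0] \<open>x0 > 0\<close> \<open>v \<in> W\<close> by auto
qed

lemma second_type_nonsingular_time:
  assumes g: "is_semigroup g" and W: "subspace W" "W \<noteq> {0}" and "second_type g W"
  shows "\<exists>x0>0. 0 \<notin> eigenvalues_on (g x0) W"
proof -
  obtain lam x0 where lam: "\<And>x. x \<ge> 0 \<Longrightarrow> eigenvalues_on (g x) W \<subseteq> {lam x, cnj (lam x)}"
    and "x0 \<ge> 0" "lam x0 \<notin> \<real>"
    using \<open>second_type g W\<close> by (auto simp: second_type_def)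
  have "x0 \<noteq> 0"
  proof
    assume "x0 = 0"
    have "g 0 = id" using g by (simp add: is_semigroup_def)
    then have "1 \<in> {lam 0, cnj (lam 0)}" using lam[of 0] one_in_eigenvalues_on_id[OF W] by auto
    then have "lam 0 = 1" using complex_cnj_cnj[of "lam 0"] by auto
    then have "lam 0 \<in> \<real>" by simp
    with \<open>lam x0 \<notin> \<real>\<close> \<open>x0 = 0\<close> show False by simp
  qed
  moreover have "lam x0 \<noteq> 0" using \<open>lam x0 \<notin> \<real>\<close> by auto
  then have "0 \<notin> eigenvalues_on (g x0) W" using lam[OF \<open>x0 \<ge> 0\<close>] by auto
  ultimately show ?thesis using \<open>x0 \<ge> 0\<close> by (intro exI[of _ x0]) simp
qed

lemma exists_nonsingular_time:
  assumes g: "is_semigroup g" and W: "subspace W" "W \<noteq> {0}"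
    and "first_type g W \<or> second_type g W"
    and not_nilpotent: "\<not> (first_type g W \<and> (\<forall>x>0. eigenvalues_on (g x) W = {0}))"
  shows "\<exists>x0>0. 0 \<notin> eigenvalues_on (g x0) W"
proof (cases "first_type g W")
  case True
  with not_nilpotent obtain x0 where "x0 > 0" "eigenvalues_on (g x0) W \<noteq> {0}" by auto
  moreover obtain r where "eigenvalues_on (g x0) W = {complex_of_real r}"
    using True \<open>x0 > 0\<close> unfolding first_type_def by (meson less_imp_le)
  ultimately show ?thesis by auto
qed (use second_type_nonsingular_time[OF g W] \<open>first_type g W \<or> second_type g W\<close> in blast)

lemma kernel_of_invariant_direct_sum:
  fixes n :: nat
  assumes lin: "linear T"
    and span: "\<And>v. \<exists>w. (\<forall>i<n. w i \<in> V i) \<and> v = (\<Sum>i<n. w i)"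
    and independent: "\<And>w. (\<forall>i<n. w i \<in> V i) \<Longrightarrow> (\<Sum>i<n. w i) = 0 \<Longrightarrow> \<forall>i<n. w i = 0"
    and invariant: "\<And>i. i < n \<Longrightarrow> T ` V i \<subseteq> V i"
    and "I \<subseteq> {..<n}"
    and vanishing: "\<And>i v. i \<in> I \<Longrightarrow> v \<in> V i \<Longrightarrow> T v = 0"
    and injective: "\<And>i v. i < n \<Longrightarrow> i \<notin> I \<Longrightarrow> v \<in> V i \<Longrightarrow> T v = 0 \<Longrightarrow> v = 0"
  shows "{v. T v = 0} = {\<Sum>i\<in>I. w i | w. \<forall>i\<in>I. w i \<in> V i}"
proof (intro set_eqI iffI)
  fix v assume "v \<in> {v. T v = 0}"
  obtain w where w: "\<forall>i<n. w i \<in> V i" "v = (\<Sum>i<n. w i)" using span by blast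
  have "(\<Sum>i<n. T (w i)) = 0" using \<open>v \<in> {v. T v = 0}\<close> w(2) lin by (simp add: linear_sum)
  then have "\<forall>i<n. T (w i) = 0" using independent[of "\<lambda>i. T (w i)"] w(1) invariant by blast
  then have "\<forall>i<n. i \<notin> I \<longrightarrow> w i = 0" using injective w(1) by blast
  then have "v = (\<Sum>i\<in>I. w i)"
    unfolding w(2) using \<open>I \<subseteq> {..<n}\<close> by (intro sum.mono_neutral_right) auto
  then show "v \<in> {\<Sum>i\<in>I. w i | w. \<forall>i\<in>I. w i \<in> V i}" using w(1) \<open>I \<subseteq> {..<n}\<close> by blast
next
  fix v assume "v \<in> {\<Sum>i\<in>I. w i | w. \<forall>i\<in>I. w i \<in> V i}"
  then obtain w where w: "\<forall>i\<in>I. w i \<in> V i" "v = (\<Sum>i\<in>I. w i)" by blast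
  then have "T v = (\<Sum>i\<in>I. T (w i))" using lin by (simp add: linear_sum)
  also have "\<dots> = 0" using vanishing w(1) by (simp add: sum.neutral)
  finally show "v \<in> {v. T v = 0}" by simp
qed

theorem mainTheorem5:
  fixes g :: "real \<Rightarrow> 'a::euclidean_space \<Rightarrow> 'a" and n :: nat and V :: "nat \<Rightarrow> 'a set"
  assumes "is_semigroup g" and "is_SRPD g n V"
  defines "I \<equiv> {i. i < n \<and> first_type g (V i) \<and>
                   (\<forall>x>0. eigenvalues_on (g x) (V i) = {0})}"
  shows "\<forall>x>0. {v. g x v = 0} = {\<Sum>i\<in>I. w i | w. \<forall>i\<in>I. w i \<in> V i}"
proof (intro allI impI)
  fix x :: real assume "x > 0"
  note SRPD = \<open>is_SRPD g n V\<close>[unfolded is_SRPD_def]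
  have V: "\<And>i. i < n \<Longrightarrow> subspace (V i) \<and> V i \<noteq> {0}"
    and invariant: "\<And>i y. i < n \<Longrightarrow> y \<ge> 0 \<Longrightarrow> g y ` V i \<subseteq> V i"
    and types: "\<And>i. i < n \<Longrightarrow> first_type g (V i) \<or> second_type g (V i)"
    using SRPD by auto
  show "{v. g x v = 0} = {\<Sum>i\<in>I. w i | w. \<forall>i\<in>I. w i \<in> V i}"
  proof (rule kernel_of_invariant_direct_sum)
    show "g x v = 0" if "i \<in> I" "v \<in> V i" for i v
      using semigroup_vanishes_on_nilpotent_subspace[OF \<open>is_semigroup g\<close>, of "V i"]
        V invariant that \<open>x > 0\<close> unfolding I_def by blast
    show "v = 0" if i: "i < n" "i \<notin> I" and v: "v \<in> V i" "g x v = 0" for i v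
    proof -
      obtain x0 where x0: "x0 > 0" "0 \<notin> eigenvalues_on (g x0) (V i)"
        using exists_nonsingular_time[OF \<open>is_semigroup g\<close>] V[OF i(1)] types[OF i(1)] i
        unfolding I_def by blast
      show ?thesis
        using semigroup_injective_on_subspace[OF \<open>is_semigroup g\<close> invariant[OF i(1)] _ x0
            less_imp_le[OF \<open>x > 0\<close>] v] V[OF i(1)] by blast
    qed
  qed (use SRPD \<open>x > 0\<close> semigroup_linear[OF \<open>is_semigroup g\<close>] in \<open>auto simp: I_def\<close>)
qed

end
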